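(* Let $f:\mathbb R^{n+m}\to\mathbb R$ be a $C^5$ function, written $f(\mathbf x,\mathbf y)$ with $\mathbf x\in\mathbb R^n$, $\mathbf y\in\mathbb R^m$, with a critical point at the origin and $f(0)=0$, such that (A1) the Hessian of $f$ at the origin is positive semidefinite of rank $n$ and nullity $m\ge1$, and (A2) its kernel is $\{(0,\mathbf y):\mathbf y\in\mathbb R^m\}$. Let $(\mathbf x'',\mathbf y')$ be a point of the unit sphere in $\mathbb R^{n+m}$ such that $t\mapsto f(\mathbf x''t^2,\mathbf y't)$ vanishes through fourth order in $t$ (its Taylor coefficients at $t=0$ of orders $0,1,2,3,4$ are all zero). Then $\mathbf y'\ne0$; in particular the trajectory $t\mapsto(\mathbf x''t^2,\mathbf y't)$ is $1$-active.
   Context: A $C^k$ vector-valued function $\varphi(t)$ is $k$-vanishing if $\varphi^{(i)}(0)=0$ for $1\le i\le k$, and $k$-active if it is $(k-1)$-vanishing but not $k$-vanishing; thus $1$-active means the first derivative at $t=0$ is nonzero. *)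

theory Defs
  imports "HOL-Analysis.Analysis"
begin

definition pderiv_dir :: "'a::real_normed_vector \<Rightarrow> ('a \<Rightarrow> real) \<Rightarrow> 'a \<Rightarrow> real" where
  "pderiv_dir v g x = (THE d. ((\<lambda>t. g (x + t *\<^sub>R v)) has_real_derivative d) (at 0))"

fun iter_pderiv :: "'a::real_normed_vector list \<Rightarrow> ('a \<Rightarrow> real) \<Rightarrow> 'a \<Rightarrow> real" where
  "iter_pderiv [] g = g"
| "iter_pderiv (v # vs) g = pderiv_dir v (iter_pderiv vs g)"

definition Ck :: "nat \<Rightarrow> ('a::euclidean_space \<Rightarrow> real) \<Rightarrow> bool" where
  "Ck k g \<longleftrightarrow> (\<forall>vs. set vs \<subseteq> Basis \<and> length vs \<le> k \<longrightarrow>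
      continuous_on UNIV (iter_pderiv vs g) \<and>
      (\<forall>v ws x. vs = v # ws \<longrightarrow>
         ((\<lambda>t. iter_pderiv ws g (x + t *\<^sub>R v)) has_real_derivative iter_pderiv vs g x) (at 0)))"

definition hessian_map :: "('a::euclidean_space \<Rightarrow> real) \<Rightarrow> 'a \<Rightarrow> 'a \<Rightarrow> 'a" where
  "hessian_map g p v = (\<Sum>j\<in>Basis. (\<Sum>i\<in>Basis. (v \<bullet> i) * iter_pderiv [i, j] g p) *\<^sub>R j)"

definition vderiv_iter :: "nat \<Rightarrow> (real \<Rightarrow> 'b::real_normed_vector) \<Rightarrow> real \<Rightarrow> 'b" where
  "vderiv_iter i \<phi> = ((\<lambda>\<psi> t. vector_derivative \<psi> (at t)) ^^ i) \<phi>"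

definition k_vanishing :: "nat \<Rightarrow> (real \<Rightarrow> 'b::real_normed_vector) \<Rightarrow> bool" where
  "k_vanishing k \<phi> \<longleftrightarrow> (\<forall>i\<in>{1..k}. vderiv_iter i \<phi> 0 = 0)"

definition k_active :: "nat \<Rightarrow> (real \<Rightarrow> 'b::real_normed_vector) \<Rightarrow> bool" where
  "k_active k \<phi> \<longleftrightarrow> k_vanishing (k - 1) \<phi> \<and> \<not> k_vanishing k \<phi>"

end

theory Submission
  imports Defs
begin

(* If y' = 0 the curve is t |-> t^2 x'', so along it f becomes h (t^2) with h s = f (s v),
   v = (x'', 0), and the fourth derivative of h (t^2) at 0 is 12 h''(0) = 12 <v, H v>.
   Vanishing to fourth order thus gives <v, H v> = 0; as the Hessian H is symmetric (Schwarz)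
   and positive semidefinite, H v = 0, so v lies in the kernel {(0, y)} and x'' = 0,
   contradicting |(x'', y')| = 1. As C^k is phrased through partial derivatives along basis
   vectors, the chain rule along the ray rests on Frechet differentiability from continuous
   partials, and the symmetry of H on Schwarz's theorem. *)

lemma iter_pderiv_snoc: "iter_pderiv (ws @ [b]) g = iter_pderiv ws (pderiv_dir b g)"
  by (induction ws) auto

lemma Ck_mono: "Ck k g \<Longrightarrow> j \<le> k \<Longrightarrow> Ck j g"
  unfolding Ck_def by auto

lemma Ck_continuous_on_iter_pderiv:
  "Ck k g \<Longrightarrow> set vs \<subseteq> Basis \<Longrightarrow> length vs \<le> k \<Longrightarrow> continuous_on UNIV (iter_pderiv vs g)"
  unfolding Ck_def by blast

lemma Ck_imp_continuous_on: "Ck k g \<Longrightarrow> continuous_on UNIV g"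
  using Ck_continuous_on_iter_pderiv[of k g "[]"] by simp

lemma Ck_pderiv_dir:
  assumes g: "Ck (Suc k) g" and b: "b \<in> Basis"
  shows "Ck k (pderiv_dir b g)"
  unfolding Ck_def
proof (intro allI impI, rule conjI)
  fix vs :: "'a list" assume vs: "set vs \<subseteq> Basis \<and> length vs \<le> k"
  then have "set (vs @ [b]) \<subseteq> Basis \<and> length (vs @ [b]) \<le> Suc k" using b by auto
  with g show "continuous_on UNIV (iter_pderiv vs (pderiv_dir b g))"
    unfolding Ck_def iter_pderiv_snoc[symmetric] by blast
  show "\<forall>v ws x. vs = v # ws \<longrightarrow> ((\<lambda>t. iter_pderiv ws (pderiv_dir b g) (x + t *\<^sub>R v))
          has_real_derivative iter_pderiv vs (pderiv_dir b g) x) (at 0)"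
  proof (intro allI impI)
    fix v ws x assume "vs = v # ws"
    with vs b have "set (v # ws @ [b]) \<subseteq> Basis \<and> length (v # ws @ [b]) \<le> Suc k" by auto
    with g show "((\<lambda>t. iter_pderiv ws (pderiv_dir b g) (x + t *\<^sub>R v))
          has_real_derivative iter_pderiv vs (pderiv_dir b g) x) (at 0)"
      unfolding Ck_def \<open>vs = v # ws\<close> iter_pderiv_snoc[symmetric] by fastforce
  qed
qed

lemma Ck_has_real_derivative_line:
  assumes g: "Ck (Suc k) g" and b: "b \<in> Basis"
  shows "((\<lambda>t. g (w + t *\<^sub>R b)) has_real_derivative pderiv_dir b g (w + t *\<^sub>R b)) (at t)"
proof -
  have "set [b] \<subseteq> Basis \<and> length [b] \<le> Suc k" using b by simp
  with g have "((\<lambda>u. g ((w + t *\<^sub>R b) + u *\<^sub>R b)) has_real_derivative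
      pderiv_dir b g (w + t *\<^sub>R b)) (at 0)"
    unfolding Ck_def by fastforce
  then have "((\<lambda>u. g (w + (u + t) *\<^sub>R b)) has_real_derivative
      pderiv_dir b g (w + t *\<^sub>R b)) (at 0)"
    by (simp add: algebra_simps)
  then show ?thesis using DERIV_shift[of "\<lambda>t. g (w + t *\<^sub>R b)" _ 0 t] by simp
qed

lemma MVT_from_0:
  fixes F F' :: "real \<Rightarrow> real"
  assumes "\<And>t. (F has_real_derivative F' t) (at t)"
  obtains \<theta> where "\<bar>\<theta>\<bar> \<le> \<bar>c\<bar>" "F c - F 0 = c * F' \<theta>"
proof (cases c "0::real" rule: linorder_cases)
  case less
  with MVT2[OF less, of F F'] assms obtain z where "c < z" "z < 0" "F 0 - F c = (0 - c) * F' z"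
    by blast
  then show ?thesis by (intro that[of z]) (auto simp: algebra_simps)
next
  case equal
  then show ?thesis by (intro that[of 0]) auto
next
  case greater
  with MVT2[OF greater, of F F'] assms obtain z where "0 < z" "z < c" "F c - F 0 = (c - 0) * F' z"
    by blast
  then show ?thesis by (intro that[of z]) auto
qed

(* Telescoping along the coordinate segments, with the mean value theorem on each one. *)
lemma increment_along_basis_list:
  fixes g :: "'a::euclidean_space \<Rightarrow> real"
  assumes g: "Ck 1 g" and bs: "set bs \<subseteq> Basis"
    and near: "\<forall>b\<in>set bs. \<forall>w. dist w x < \<delta> \<longrightarrow> \<bar>pderiv_dir b g w - pderiv_dir b g x\<bar> \<le> \<epsilon>"
    and small: "dist z x + (\<Sum>b\<leftarrow>bs. \<bar>c b\<bar>) < \<delta>"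
  shows "\<bar>g (z + (\<Sum>b\<leftarrow>bs. c b *\<^sub>R b)) - g z - (\<Sum>b\<leftarrow>bs. c b * pderiv_dir b g x)\<bar>
           \<le> \<epsilon> * (\<Sum>b\<leftarrow>bs. \<bar>c b\<bar>)"
  using bs near small
proof (induction bs arbitrary: z)
  case Nil
  then show ?case by simp
next
  case (Cons b bs)
  have b: "b \<in> Basis" using Cons.prems by auto
  define z' where "z' = z + c b *\<^sub>R b"
  have dist_shift: "dist (z + t *\<^sub>R b) x \<le> dist z x + \<bar>t\<bar>" for t
    using norm_triangle_ineq[of "z - x" "t *\<^sub>R b"] b by (simp add: dist_norm algebra_simps)
  have "(\<Sum>b\<leftarrow>bs. \<bar>c b\<bar>) \<ge> 0" by (induction bs) auto
  have "((\<lambda>t. g (z + t *\<^sub>R b)) has_real_derivative pderiv_dir b g (z + t *\<^sub>R b)) (at t)" for t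
    using Ck_has_real_derivative_line[of 0 g b] g b by simp
  then obtain \<theta> where \<theta>: "\<bar>\<theta>\<bar> \<le> \<bar>c b\<bar>"
    "g (z + c b *\<^sub>R b) - g (z + 0 *\<^sub>R b) = c b * pderiv_dir b g (z + \<theta> *\<^sub>R b)"
    by (rule MVT_from_0)
  have "dist (z + \<theta> *\<^sub>R b) x < \<delta>"
    using dist_shift[of \<theta>] \<theta>(1) Cons.prems \<open>(\<Sum>b\<leftarrow>bs. \<bar>c b\<bar>) \<ge> 0\<close> by simp
  then have "\<bar>pderiv_dir b g (z + \<theta> *\<^sub>R b) - pderiv_dir b g x\<bar> \<le> \<epsilon>" using Cons.prems by auto
  then have first_step: "\<bar>g z' - g z - c b * pderiv_dir b g x\<bar> \<le> \<epsilon> * \<bar>c b\<bar>"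
    using \<theta>(2) unfolding z'_def
    by (simp add: abs_mult right_diff_distrib[symmetric] mult.commute[of \<epsilon>] mult_left_mono)
  have "\<bar>g (z' + (\<Sum>b\<leftarrow>bs. c b *\<^sub>R b)) - g z' - (\<Sum>b\<leftarrow>bs. c b * pderiv_dir b g x)\<bar>
          \<le> \<epsilon> * (\<Sum>b\<leftarrow>bs. \<bar>c b\<bar>)"
    using Cons dist_shift[of "c b"] unfolding z'_def by auto
  moreover have "g (z + (\<Sum>b\<leftarrow>b # bs. c b *\<^sub>R b)) = g (z' + (\<Sum>b\<leftarrow>bs. c b *\<^sub>R b))"
    by (simp add: z'_def add.assoc)
  ultimately show ?case using first_step by (simp add: abs_le_iff distrib_left)
qed

lemma Ck1_pderiv_dir_near:
  fixes g :: "'a::euclidean_space \<Rightarrow> real"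
  assumes g: "Ck 1 g" and "\<epsilon> > 0"
  obtains \<delta> where "\<delta> > 0"
    "\<forall>b\<in>Basis. \<forall>w. dist w x < \<delta> \<longrightarrow> \<bar>pderiv_dir b g w - pderiv_dir b g x\<bar> \<le> \<epsilon>"
proof -
  have "\<forall>\<^sub>F w in nhds x. \<forall>b\<in>Basis. dist (pderiv_dir b g w) (pderiv_dir b g x) < \<epsilon>"
  proof (rule eventually_ball_finite[OF finite_Basis], rule ballI)
    fix b :: 'a assume "b \<in> Basis"
    then have "isCont (pderiv_dir b g) x"
      using Ck_imp_continuous_on[OF Ck_pderiv_dir[of 0 g b]] g
      by (simp add: continuous_on_eq_continuous_at)
    then show "\<forall>\<^sub>F w in nhds x. dist (pderiv_dir b g w) (pderiv_dir b g x) < \<epsilon>"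
      using \<open>\<epsilon> > 0\<close> by (simp add: isCont_def tendsto_at_iff_tendsto_nhds tendstoD)
  qed
  then obtain \<delta> where "\<delta> > 0"
    and "\<forall>w. dist w x < \<delta> \<longrightarrow> (\<forall>b\<in>Basis. dist (pderiv_dir b g w) (pderiv_dir b g x) < \<epsilon>)"
    unfolding eventually_nhds_metric by blast
  then show thesis by (intro that[of \<delta>]) (auto simp: dist_real_def less_imp_le)
qed

lemma Ck1_has_derivative:
  fixes g :: "'a::euclidean_space \<Rightarrow> real"
  assumes g: "Ck 1 g"
  shows "(g has_derivative (\<lambda>h. \<Sum>b\<in>Basis. (h \<bullet> b) * pderiv_dir b g x)) (at x)"
  unfolding has_derivative_at_alt
proof (intro conjI allI impI)
  show "bounded_linear (\<lambda>h. \<Sum>b\<in>Basis. (h \<bullet> b) * pderiv_dir b g x)"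
    by (intro bounded_linear_sum bounded_linear_mult_const bounded_linear_inner_left)
  fix e :: real assume e: "e > 0"
  define N where "N = real DIM('a)"
  have N: "N \<ge> 1" unfolding N_def by (simp add: Suc_le_eq)
  define \<epsilon> where "\<epsilon> = e / N"
  have \<epsilon>: "\<epsilon> > 0" using e N unfolding \<epsilon>_def by simp
  obtain \<delta> where \<delta>: "\<delta> > 0"
    "\<forall>b\<in>Basis. \<forall>w. dist w x < \<delta> \<longrightarrow> \<bar>pderiv_dir b g w - pderiv_dir b g x\<bar> \<le> \<epsilon>"
    using Ck1_pderiv_dir_near[OF g \<epsilon>] by blast
  obtain bs :: "'a list" where bs: "distinct bs" "set bs = Basis"
    using finite_distinct_list[OF finite_Basis] by metis
  show "\<exists>d>0. \<forall>y. norm (y - x) < d \<longrightarrow>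
          norm (g y - g x - (\<Sum>b\<in>Basis. ((y - x) \<bullet> b) * pderiv_dir b g x)) \<le> e * norm (y - x)"
  proof (intro exI[of _ "\<delta> / N"] conjI allI impI)
    show "\<delta> / N > 0" using \<delta> N by simp
    fix y assume y: "norm (y - x) < \<delta> / N"
    define c where "c b = (y - x) \<bullet> b" for b
    have sum_coords: "(\<Sum>b\<leftarrow>bs. \<bar>c b\<bar>) \<le> N * norm (y - x)"
    proof -
      have "(\<Sum>b\<leftarrow>bs. \<bar>c b\<bar>) = (\<Sum>b\<in>Basis. \<bar>(y - x) \<bullet> b\<bar>)"
        using bs by (simp add: sum_list_distinct_conv_sum_set c_def)
      also have "\<dots> \<le> (\<Sum>b\<in>(Basis::'a set). norm (y - x))"
        by (intro sum_mono Basis_le_norm)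
      finally show ?thesis by (simp add: N_def)
    qed
    have "N * norm (y - x) < \<delta>" using y N by (simp add: field_simps)
    then have "\<bar>g (x + (\<Sum>b\<leftarrow>bs. c b *\<^sub>R b)) - g x - (\<Sum>b\<leftarrow>bs. c b * pderiv_dir b g x)\<bar>
                 \<le> \<epsilon> * (\<Sum>b\<leftarrow>bs. \<bar>c b\<bar>)"
      using sum_coords \<delta> bs by (intro increment_along_basis_list[OF g]) auto
    also have "\<dots> \<le> \<epsilon> * (N * norm (y - x))" using sum_coords \<epsilon> by (simp add: mult_left_mono)
    also have "\<dots> = e * norm (y - x)" using N unfolding \<epsilon>_def by simp
    finally show "norm (g y - g x - (\<Sum>b\<in>Basis. ((y - x) \<bullet> b) * pderiv_dir b g x))
        \<le> e * norm (y - x)"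
      using bs by (simp add: sum_list_distinct_conv_sum_set c_def euclidean_representation)
  qed
qed

lemma Ck1_has_real_derivative_ray:
  fixes g :: "'a::euclidean_space \<Rightarrow> real"
  assumes "Ck 1 g"
  shows "((\<lambda>s. g (s *\<^sub>R v)) has_real_derivative
           (\<Sum>b\<in>Basis. (v \<bullet> b) * pderiv_dir b g (s *\<^sub>R v))) (at s)"
proof -
  have "((\<lambda>s. s *\<^sub>R v) has_derivative (\<lambda>ds. ds *\<^sub>R v)) (at s)"
    by (auto intro!: derivative_eq_intros)
  from has_derivative_compose[OF this Ck1_has_derivative[OF assms]]
  have "((\<lambda>s. g (s *\<^sub>R v)) has_derivative
          (\<lambda>ds. \<Sum>b\<in>Basis. ((ds *\<^sub>R v) \<bullet> b) * pderiv_dir b g (s *\<^sub>R v))) (at s)"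
    by (simp add: o_def)
  moreover have "(\<lambda>ds. \<Sum>b\<in>Basis. ((ds *\<^sub>R v) \<bullet> b) * pderiv_dir b g (s *\<^sub>R v))
                   = (*) (\<Sum>b\<in>Basis. (v \<bullet> b) * pderiv_dir b g (s *\<^sub>R v))"
    by (simp add: fun_eq_iff sum_distrib_left mult_ac)
  ultimately show ?thesis by (simp add: has_field_derivative_def)
qed

lemma mixed_second_difference:
  fixes g :: "'a::euclidean_space \<Rightarrow> real"
  assumes g: "Ck 2 g" and i: "i \<in> Basis" and j: "j \<in> Basis"
  obtains \<alpha> \<beta> where "\<bar>\<alpha>\<bar> \<le> \<bar>s\<bar>" "\<bar>\<beta>\<bar> \<le> \<bar>s\<bar>"
    "g (p + s *\<^sub>R i + s *\<^sub>R j) - g (p + s *\<^sub>R i) - g (p + s *\<^sub>R j) + g p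
       = s * s * iter_pderiv [j, i] g (p + \<alpha> *\<^sub>R i + \<beta> *\<^sub>R j)"
proof -
  have g1: "Ck (Suc 0) g" and gi: "Ck (Suc 0) (pderiv_dir i g)"
    using g i Ck_mono[OF g] Ck_pderiv_dir[of 1 g i] by (simp_all add: numeral_2_eq_2)
  define F where "F a = g (p + s *\<^sub>R j + a *\<^sub>R i) - g (p + a *\<^sub>R i)" for a
  have "(F has_real_derivative
          pderiv_dir i g (p + s *\<^sub>R j + a *\<^sub>R i) - pderiv_dir i g (p + a *\<^sub>R i)) (at a)" for a
    unfolding F_def by (intro DERIV_diff Ck_has_real_derivative_line[OF g1 i])
  then obtain \<alpha> where \<alpha>: "\<bar>\<alpha>\<bar> \<le> \<bar>s\<bar>"
    "F s - F 0 = s * (pderiv_dir i g (p + s *\<^sub>R j + \<alpha> *\<^sub>R i) - pderiv_dir i g (p + \<alpha> *\<^sub>R i))"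
    by (rule MVT_from_0)
  define G where "G b = pderiv_dir i g (p + \<alpha> *\<^sub>R i + b *\<^sub>R j)" for b
  have "(G has_real_derivative iter_pderiv [j, i] g (p + \<alpha> *\<^sub>R i + b *\<^sub>R j)) (at b)" for b
    unfolding G_def using Ck_has_real_derivative_line[OF gi j] by simp
  then obtain \<beta> where \<beta>: "\<bar>\<beta>\<bar> \<le> \<bar>s\<bar>"
    "G s - G 0 = s * iter_pderiv [j, i] g (p + \<alpha> *\<^sub>R i + \<beta> *\<^sub>R j)"
    by (rule MVT_from_0)
  have "g (p + s *\<^sub>R i + s *\<^sub>R j) - g (p + s *\<^sub>R i) - g (p + s *\<^sub>R j) + g p = F s - F 0"
    unfolding F_def by (simp add: add_ac)
  also have "\<dots> = s * (G s - G 0)"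
    unfolding \<alpha>(2) G_def by (simp add: add_ac)
  also have "\<dots> = s * s * iter_pderiv [j, i] g (p + \<alpha> *\<^sub>R i + \<beta> *\<^sub>R j)"
    unfolding \<beta>(2) by simp
  finally show thesis by (rule that[OF \<alpha>(1) \<beta>(1)])
qed

lemma dist_add_scaleR_Basis_le:
  fixes u w :: "'a::euclidean_space"
  assumes "u \<in> Basis" "w \<in> Basis"
  shows "dist (p + a *\<^sub>R u + b *\<^sub>R w) p \<le> \<bar>a\<bar> + \<bar>b\<bar>"
  using norm_triangle_ineq[of "a *\<^sub>R u" "b *\<^sub>R w"] assms by (simp add: dist_norm add.assoc)

(* Both mixed partials at p are limits of the same symmetric second difference quotient. *)
lemma Ck2_mixed_pderivs_close:
  fixes g :: "'a::euclidean_space \<Rightarrow> real"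
  assumes g: "Ck 2 g" and i: "i \<in> Basis" and j: "j \<in> Basis" and "e > 0"
  shows "\<bar>iter_pderiv [i, j] g p - iter_pderiv [j, i] g p\<bar> \<le> 2 * e"
proof -
  define Q1 where "Q1 = iter_pderiv [j, i] g"
  define Q2 where "Q2 = iter_pderiv [i, j] g"
  have "continuous_on UNIV Q1"
    unfolding Q1_def using i j by (intro Ck_continuous_on_iter_pderiv[OF g]) auto
  moreover have "continuous_on UNIV Q2"
    unfolding Q2_def using i j by (intro Ck_continuous_on_iter_pderiv[OF g]) auto
  ultimately have "isCont Q1 p" "isCont Q2 p" by (simp_all add: continuous_on_eq_continuous_at)
  then have "\<forall>\<^sub>F x in nhds p. dist (Q1 x) (Q1 p) < e \<and> dist (Q2 x) (Q2 p) < e"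
    using \<open>e > 0\<close>
    by (intro eventually_conj) (simp_all add: isCont_def tendsto_at_iff_tendsto_nhds tendstoD)
  then obtain d where "d > 0"
    and d: "\<And>x. dist x p < d \<Longrightarrow> dist (Q1 x) (Q1 p) < e \<and> dist (Q2 x) (Q2 p) < e"
    unfolding eventually_nhds_metric by blast
  define s where "s = d / 4"
  have "s > 0" using \<open>d > 0\<close> by (simp add: s_def)
  have near: "dist (p + a *\<^sub>R u + b *\<^sub>R w) p < d"
    if "\<bar>a\<bar> \<le> \<bar>s\<bar>" "\<bar>b\<bar> \<le> \<bar>s\<bar>" "u \<in> Basis" "w \<in> Basis" for a b u w
    using dist_add_scaleR_Basis_le[OF that(3,4), of p a b] that(1,2) \<open>d > 0\<close>
    unfolding s_def by linarith
  obtain \<alpha>1 \<beta>1 where \<alpha>\<beta>1: "\<bar>\<alpha>1\<bar> \<le> \<bar>s\<bar>" "\<bar>\<beta>1\<bar> \<le> \<bar>s\<bar>"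
    "g (p + s *\<^sub>R i + s *\<^sub>R j) - g (p + s *\<^sub>R i) - g (p + s *\<^sub>R j) + g p
       = s * s * Q1 (p + \<alpha>1 *\<^sub>R i + \<beta>1 *\<^sub>R j)"
    unfolding Q1_def by (rule mixed_second_difference[OF g i j])
  obtain \<alpha>2 \<beta>2 where \<alpha>\<beta>2: "\<bar>\<alpha>2\<bar> \<le> \<bar>s\<bar>" "\<bar>\<beta>2\<bar> \<le> \<bar>s\<bar>"
    "g (p + s *\<^sub>R j + s *\<^sub>R i) - g (p + s *\<^sub>R j) - g (p + s *\<^sub>R i) + g p
       = s * s * Q2 (p + \<alpha>2 *\<^sub>R j + \<beta>2 *\<^sub>R i)"
    unfolding Q2_def by (rule mixed_second_difference[OF g j i])
  have "g (p + s *\<^sub>R j + s *\<^sub>R i) = g (p + s *\<^sub>R i + s *\<^sub>R j)" by (simp add: add_ac)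
  with \<alpha>\<beta>1(3) \<alpha>\<beta>2(3)
  have "s * s * Q1 (p + \<alpha>1 *\<^sub>R i + \<beta>1 *\<^sub>R j) = s * s * Q2 (p + \<alpha>2 *\<^sub>R j + \<beta>2 *\<^sub>R i)"
    by linarith
  then have "Q1 (p + \<alpha>1 *\<^sub>R i + \<beta>1 *\<^sub>R j) = Q2 (p + \<alpha>2 *\<^sub>R j + \<beta>2 *\<^sub>R i)"
    using \<open>s > 0\<close> by simp
  moreover have "\<bar>Q1 (p + \<alpha>1 *\<^sub>R i + \<beta>1 *\<^sub>R j) - Q1 p\<bar> < e"
    using d[OF near[OF \<alpha>\<beta>1(1,2) i j]] by (simp add: dist_real_def)
  moreover have "\<bar>Q2 (p + \<alpha>2 *\<^sub>R j + \<beta>2 *\<^sub>R i) - Q2 p\<bar> < e"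
    using d[OF near[OF \<alpha>\<beta>2(1,2) j i]] by (simp add: dist_real_def)
  ultimately show ?thesis unfolding Q1_def Q2_def by linarith
qed

lemma Ck2_pderiv_commute:
  fixes g :: "'a::euclidean_space \<Rightarrow> real"
  assumes g: "Ck 2 g" and i: "i \<in> Basis" and j: "j \<in> Basis"
  shows "iter_pderiv [i, j] g p = iter_pderiv [j, i] g p"
proof -
  have "\<bar>iter_pderiv [i, j] g p - iter_pderiv [j, i] g p\<bar> \<le> 0"
  proof (rule field_le_epsilon)
    fix e :: real assume "e > 0"
    then show "\<bar>iter_pderiv [i, j] g p - iter_pderiv [j, i] g p\<bar> \<le> 0 + e"
      using Ck2_mixed_pderivs_close[OF g i j, of "e / 2" p] by simp
  qed
  then show ?thesis by simp
qed

lemma linear_hessian_map: "linear (hessian_map g p)"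
  unfolding hessian_map_def linear_iff
  by (simp add: algebra_simps sum.distrib scaleR_sum_right sum_distrib_left)

lemma inner_hessian_map:
  "u \<bullet> hessian_map g p w = (\<Sum>j\<in>Basis. \<Sum>i\<in>Basis. (u \<bullet> j) * (w \<bullet> i) * iter_pderiv [i, j] g p)"
  unfolding hessian_map_def by (simp add: inner_sum_right sum_distrib_left mult_ac)

lemma hessian_map_symmetric:
  fixes g :: "'a::euclidean_space \<Rightarrow> real"
  assumes "Ck 2 g"
  shows "u \<bullet> hessian_map g p w = w \<bullet> hessian_map g p u"
proof -
  have "u \<bullet> hessian_map g p w = (\<Sum>j\<in>Basis. \<Sum>i\<in>Basis. (u \<bullet> j) * (w \<bullet> i) * iter_pderiv [j, i] g p)"
    unfolding inner_hessian_map using Ck2_pderiv_commute[OF assms] by (intro sum.cong) simp_all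
  also have "\<dots> = (\<Sum>i\<in>Basis. \<Sum>j\<in>Basis. (u \<bullet> j) * (w \<bullet> i) * iter_pderiv [j, i] g p)"
    by (rule sum.swap)
  also have "\<dots> = w \<bullet> hessian_map g p u"
    unfolding inner_hessian_map by (simp add: mult_ac)
  finally show ?thesis .
qed

lemma quadratic_nonneg_imp_linear_coeff_eq_0:
  fixes a b :: real
  assumes "\<And>t. 0 \<le> 2 * t * a + t\<^sup>2 * b"
  shows "a = 0"
proof -
  define c where "c = \<bar>b\<bar> + 1"
  have c: "c > 0" "b \<le> c" unfolding c_def by auto
  have "0 \<le> c\<^sup>2 * (2 * (- a / c) * a + (- a / c)\<^sup>2 * b)"
    using assms[of "- a / c"] by simp
  also have "\<dots> = - 2 * a\<^sup>2 * c + a\<^sup>2 * b"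
    using c by (simp add: field_simps power2_eq_square)
  also have "\<dots> \<le> - a\<^sup>2 * c"
    using mult_left_mono[OF c(2), of "a\<^sup>2"] by (simp add: mult.commute)
  finally have "a\<^sup>2 * c \<le> 0" by simp
  with c show ?thesis by (simp add: mult_le_0_iff)
qed

lemma psd_symmetric_form_eq_0_imp_eq_0:
  fixes M :: "'a::real_inner \<Rightarrow> 'a"
  assumes M: "linear M" and sym: "\<And>u w. u \<bullet> M w = w \<bullet> M u" and psd: "\<And>u. 0 \<le> u \<bullet> M u"
    and v: "v \<bullet> M v = 0"
  shows "M v = 0"
proof -
  have "0 \<le> 2 * t * (M v \<bullet> M v) + t\<^sup>2 * (M v \<bullet> M (M v))" for t
  proof -
    have "0 \<le> (v + t *\<^sub>R M v) \<bullet> M (v + t *\<^sub>R M v)" by (rule psd)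
    also have "\<dots> = v \<bullet> M v + t * (v \<bullet> M (M v)) + t * (M v \<bullet> M v) + t\<^sup>2 * (M v \<bullet> M (M v))"
      by (simp add: linear_add[OF M] linear_cmul[OF M] algebra_simps power2_eq_square)
    also have "\<dots> = 2 * t * (M v \<bullet> M v) + t\<^sup>2 * (M v \<bullet> M (M v))"
      using v sym[of v "M v"] by simp
    finally show ?thesis .
  qed
  then have "M v \<bullet> M v = 0" by (rule quadratic_nonneg_imp_linear_coeff_eq_0)
  then show ?thesis by simp
qed

lemma Ck3_ray_derivatives:
  fixes f :: "'a::euclidean_space \<Rightarrow> real"
  assumes f: "Ck 3 f"
  obtains h1 h2 h3 :: "real \<Rightarrow> real" where
    "\<And>s. ((\<lambda>s. f (s *\<^sub>R v)) has_real_derivative h1 s) (at s)"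
    "\<And>s. (h1 has_real_derivative h2 s) (at s)"
    "\<And>s. (h2 has_real_derivative h3 s) (at s)"
    "isCont h3 0"
    "\<And>s. h2 s = v \<bullet> hessian_map f (s *\<^sub>R v) v"
proof -
  let ?D = pderiv_dir
  have f2: "Ck 2 (?D b f)" if "b \<in> Basis" for b
    using Ck_pderiv_dir[of 2 f b] f that by (simp add: numeral_3_eq_3 numeral_2_eq_2)
  have f1: "Ck 1 (?D c (?D b f))" if "b \<in> Basis" "c \<in> Basis" for b c
    using Ck_pderiv_dir[of 1 "?D b f" c] f2 that by (simp add: numeral_2_eq_2)
  have f0: "continuous_on UNIV (?D d (?D c (?D b f)))"
    if "b \<in> Basis" "c \<in> Basis" "d \<in> Basis" for b c d
    using Ck_imp_continuous_on[OF Ck_pderiv_dir[of 0 "?D c (?D b f)" d]] f1 that by simp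
  define h1 where "h1 s = (\<Sum>b\<in>Basis. (v \<bullet> b) * ?D b f (s *\<^sub>R v))" for s
  define h2 where "h2 s = (\<Sum>b\<in>Basis. (v \<bullet> b) *
      (\<Sum>c\<in>Basis. (v \<bullet> c) * ?D c (?D b f) (s *\<^sub>R v)))" for s
  define h3 where "h3 s = (\<Sum>b\<in>Basis. (v \<bullet> b) *
      (\<Sum>c\<in>Basis. (v \<bullet> c) * (\<Sum>d\<in>Basis. (v \<bullet> d) * ?D d (?D c (?D b f)) (s *\<^sub>R v))))" for s
  show thesis
  proof (rule that)
    show "((\<lambda>s. f (s *\<^sub>R v)) has_real_derivative h1 s) (at s)" for s
      unfolding h1_def using Ck_mono[OF f] by (intro Ck1_has_real_derivative_ray) simp
    show "(h1 has_real_derivative h2 s) (at s)" for s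
      unfolding h1_def h2_def using Ck_mono[OF f2]
      by (intro DERIV_sum DERIV_cmult Ck1_has_real_derivative_ray) auto
    show "(h2 has_real_derivative h3 s) (at s)" for s
      unfolding h2_def h3_def using f1
      by (intro DERIV_sum DERIV_cmult Ck1_has_real_derivative_ray) auto
    show "isCont h3 0"
      unfolding h3_def using f0
      by (intro continuous_intros isCont_o2[of _ "\<lambda>x. x *\<^sub>R v"])
         (auto simp: continuous_on_eq_continuous_at)
    show "h2 s = v \<bullet> hessian_map f (s *\<^sub>R v) v" for s
      unfolding inner_hessian_map h2_def by (simp add: sum_distrib_left mult_ac)
  qed
qed

lemma has_real_derivative_comp_power2:
  assumes "\<And>s. (h has_real_derivative h' s) (at s)" "D = h' (t\<^sup>2) * (2 * t)"
  shows "((\<lambda>t. h (t\<^sup>2)) has_real_derivative D) (at t)"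
  unfolding assms(2) by (rule DERIV_chain2[OF assms(1)]) (auto intro!: derivative_eq_intros)

lemma deriv4_comp_power2_at_0:
  fixes h h1 h2 h3 :: "real \<Rightarrow> real"
  assumes D0: "\<And>s. (h has_real_derivative h1 s) (at s)"
    and D1: "\<And>s. (h1 has_real_derivative h2 s) (at s)"
    and D2: "\<And>s. (h2 has_real_derivative h3 s) (at s)"
    and "isCont h3 0"
  shows "(deriv ^^ 4) (\<lambda>t. h (t\<^sup>2)) 0 = 12 * h2 0"
proof -
  define G1 where "G1 t = h1 (t\<^sup>2) * (2 * t)" for t :: real
  define G2 where "G2 t = 2 * h1 (t\<^sup>2) + 4 * t\<^sup>2 * h2 (t\<^sup>2)" for t :: real
  define G3 where "G3 t = 12 * t * h2 (t\<^sup>2) + 8 * t ^ 3 * h3 (t\<^sup>2)" for t :: real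
  have "deriv (\<lambda>t. h (t\<^sup>2)) = G1"
    unfolding G1_def by (intro ext DERIV_imp_deriv has_real_derivative_comp_power2[OF D0]) simp
  moreover have "deriv G1 = G2"
  proof (intro ext DERIV_imp_deriv)
    show "(G1 has_real_derivative G2 t) (at t)" for t
      unfolding G1_def
      by (intro derivative_eq_intros has_real_derivative_comp_power2[OF D1] refl)
         (simp_all add: power2_eq_square, simp add: G2_def power2_eq_square algebra_simps)
  qed
  moreover have "deriv G2 = G3"
  proof (intro ext DERIV_imp_deriv)
    show "(G2 has_real_derivative G3 t) (at t)" for t
      unfolding G2_def
      by (intro derivative_eq_intros has_real_derivative_comp_power2[OF D1]
          has_real_derivative_comp_power2[OF D2] refl)
         (simp_all add: power2_eq_square,
          simp add: G3_def power2_eq_square power3_eq_cube algebra_simps)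
  qed
  moreover have "deriv G3 0 = 12 * h2 0"
  \<comment> \<open>only at 0, by Caratheodory, since h3 need not be differentiable\<close>
  proof (intro DERIV_imp_deriv)
    define K where "K t = 12 * h2 (t\<^sup>2) + 8 * t\<^sup>2 * h3 (t\<^sup>2)" for t :: real
    have "isCont h2 0" using D2 DERIV_isCont by blast
    then have "isCont K 0"
      unfolding K_def using \<open>isCont h3 0\<close>
      by (intro continuous_intros isCont_o2[of _ "\<lambda>t. t\<^sup>2"]) simp_all
    moreover have "\<forall>t. G3 t - G3 0 = K t * (t - 0)"
      unfolding G3_def K_def by (simp add: algebra_simps power2_eq_square power3_eq_cube)
    moreover have "K 0 = 12 * h2 0" by (simp add: K_def)
    ultimately show "(G3 has_real_derivative 12 * h2 0) (at 0)"
      unfolding DERIV_caratheodory_within by blast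
  qed
  ultimately show ?thesis by (simp add: numeral_eq_Suc)
qed

lemma k_active_1_iff: "k_active 1 \<phi> \<longleftrightarrow> vector_derivative \<phi> (at 0) \<noteq> 0"
  unfolding k_active_def k_vanishing_def vderiv_iter_def by simp

lemma vector_derivative_parabola_at_0:
  "vector_derivative (\<lambda>t::real. (t\<^sup>2 *\<^sub>R x, t *\<^sub>R y)) (at 0) = (0, y)"
proof -
  have "((\<lambda>t::real. (t\<^sup>2 *\<^sub>R x, t *\<^sub>R y)) has_vector_derivative ((2 * 0) *\<^sub>R x, y)) (at 0)"
    by (rule has_vector_derivative_Pair)
       (auto intro!: derivative_eq_intros simp: has_vector_derivative_def)
  then show ?thesis by (simp add: vector_derivative_at)
qed

theorem lemma6p5:
  fixes f :: "('n::euclidean_space \<times> 'm::euclidean_space) \<Rightarrow> real"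
    and x2 :: 'n and y1 :: 'm
  assumes C5: "Ck 5 f"
    and crit: "(f has_derivative (\<lambda>_. 0)) (at 0)"
    and f0: "f 0 = 0"
    and psd: "\<forall>v. v \<bullet> hessian_map f 0 v \<ge> 0"
    and rank: "dim (range (hessian_map f 0)) = DIM('n)"
    and nullity: "dim {v. hessian_map f 0 v = 0} = DIM('m)"
    and m_pos: "DIM('m) \<ge> 1"
    and kernel: "{v. hessian_map f 0 v = 0} = {(0, y) | y. True}"
    and sphere: "norm (x2, y1) = 1"
    and vanish: "\<forall>k\<le>4. (deriv ^^ k) (\<lambda>t. f (t\<^sup>2 *\<^sub>R x2, t *\<^sub>R y1)) 0 = 0"
  shows "y1 \<noteq> 0 \<and> k_active 1 (\<lambda>t::real. (t\<^sup>2 *\<^sub>R x2, t *\<^sub>R y1))"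
proof -
  have "y1 \<noteq> 0"
  proof
    assume "y1 = 0"
    define v where "v = (x2, 0::'m)"
    have "Ck 3 f" "Ck 2 f" by (rule Ck_mono[OF C5], simp)+
    obtain h1 h2 h3 where D0: "\<And>s. ((\<lambda>s. f (s *\<^sub>R v)) has_real_derivative h1 s) (at s)"
      and D1: "\<And>s. (h1 has_real_derivative h2 s) (at s)"
      and D2: "\<And>s. (h2 has_real_derivative h3 s) (at s)"
      and "isCont h3 0" and h2: "\<And>s. h2 s = v \<bullet> hessian_map f (s *\<^sub>R v) v"
      by (rule Ck3_ray_derivatives[OF \<open>Ck 3 f\<close>, where v = v]) (rule that)
    have "(\<lambda>t. f (t\<^sup>2 *\<^sub>R x2, t *\<^sub>R y1)) = (\<lambda>t. f (t\<^sup>2 *\<^sub>R v))"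
      using \<open>y1 = 0\<close> by (simp add: v_def)
    with vanish[rule_format, OF order_refl] have "12 * h2 0 = 0"
      using deriv4_comp_power2_at_0[OF D0 D1 D2 \<open>isCont h3 0\<close>] by simp
    then have "v \<bullet> hessian_map f 0 v = 0" using h2[of 0] by simp
    then have "hessian_map f 0 v = 0"
      using psd_symmetric_form_eq_0_imp_eq_0[OF linear_hessian_map
          hessian_map_symmetric[OF \<open>Ck 2 f\<close>]] psd by blast
    then have "x2 = 0" using kernel unfolding v_def by blast
    with sphere \<open>y1 = 0\<close> show False by simp
  qed
  then show ?thesis
    unfolding k_active_1_iff vector_derivative_parabola_at_0 by (simp add: zero_prod_def)
qed

end
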